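(* Let $S=\{\rho_1=0<\rho_2<\cdots\}\neq\mathbb{N}_0$ be an Arf numerical semigroup with conductor $c=\rho_r$. If $j$ is an integer with $\rho_{r-1}+r\le j<c+r$, then $\beta(\rho_j)=r-1$.
   Context: A numerical semigroup is a submonoid $S$ of $(\mathbb{N}_0,+)$ with finite complement, with elements listed increasingly. $S$ is Arf if $\rho_i+\rho_j-\rho_k\in S$ for all positive integers $i\ge j\ge k$. The conductor $c$ is the smallest integer such that all integers $\ge c$ lie in $S$, with $c=\rho_r$ (so $r\ge2$ when $S\neq\mathbb{N}_0$). For $\rho\in S$: $A[\rho]=\{p\in S:\ \rho-p\in S\}$ and $\beta(\rho)=\max\{j\ge1:\ \rho_1,\dots,\rho_j\in A[\rho]\ \text{and}\ 2\rho_j\le\rho\}$. *)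

theory Defs
  imports Main "HOL-Library.Infinite_Set"
begin

definition numerical_semigroup :: "nat set \<Rightarrow> bool" where
  "numerical_semigroup S \<longleftrightarrow> 0 \<in> S \<and> (\<forall>a\<in>S. \<forall>b\<in>S. a + b \<in> S) \<and> finite (UNIV - S)"

text \<open>The elements of S listed increasingly, 1-indexed: rho S 1 = 0 < rho S 2 < ...\<close>
definition rho :: "nat set \<Rightarrow> nat \<Rightarrow> nat" where
  "rho S i = enumerate S (i - 1)"

definition Arf :: "nat set \<Rightarrow> bool" where
  "Arf S \<longleftrightarrow> (\<forall>i j k. 1 \<le> k \<and> k \<le> j \<and> j \<le> i \<longrightarrow> rho S i + rho S j - rho S k \<in> S)"

definition conductor :: "nat set \<Rightarrow> nat" where
  "conductor S = (LEAST c. \<forall>n\<ge>c. n \<in> S)"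

text \<open>A[rho] = {p in S. rho - p in S} (with rho - p taken in the integers, so p \<le> rho).\<close>
definition Aset :: "nat set \<Rightarrow> nat \<Rightarrow> nat set" where
  "Aset S r = {p \<in> S. p \<le> r \<and> r - p \<in> S}"

definition beta :: "nat set \<Rightarrow> nat \<Rightarrow> nat" where
  "beta S r = Max {j. 1 \<le> j \<and> (\<forall>i\<in>{1..j}. rho S i \<in> Aset S r) \<and> 2 * rho S j \<le> r}"

end

theory Submission
  imports Defs
begin

text \<open>
  Only the conductor matters: every \<open>x\<close> with \<open>c + \<rho>\<^sub>r\<^sub>-\<^sub>1 \<le> x < 2c\<close> satisfies
  \<open>x - \<rho>\<^sub>i \<ge> c\<close> for \<open>i < r\<close>, so \<open>\<rho>\<^sub>1, \<dots>, \<rho>\<^sub>r\<^sub>-\<^sub>1 \<in> A[x]\<close> and \<open>2\<rho>\<^sub>r\<^sub>-\<^sub>1 < x\<close>,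
  while \<open>2\<rho>\<^sub>k \<ge> 2c > x\<close> for \<open>k \<ge> r\<close>. Since the elements of \<open>S\<close> from \<open>c = \<rho>\<^sub>r\<close> on
  are consecutive, \<open>\<rho>\<^sub>j = c + (j - r)\<close> lies in this window exactly for the given \<open>j\<close>.
\<close>

lemma enumerate_add_beyond:
  fixes S :: "nat set"
  assumes "infinite S" and "\<forall>n\<ge>c. n \<in> S" and "c \<le> enumerate S m"
  shows "enumerate S (m + k) = enumerate S m + k"
proof (induction k)
  case 0
  then show ?case by simp
next
  case (Suc k)
  have "enumerate S (Suc (m + k)) = (LEAST s. s \<in> S \<and> enumerate S (m + k) < s)"
    using enumerate_Suc''[OF assms(1)] by blast
  also have "\<dots> = enumerate S (m + k) + 1"
    by (rule Least_equality) (use assms(2,3) Suc in auto)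
  finally show ?case
    using Suc by simp
qed

lemma numerical_semigroup_infinite:
  assumes "numerical_semigroup S"
  shows "infinite S"
proof
  assume "finite S"
  with assms have "finite (S \<union> (UNIV - S))"
    unfolding numerical_semigroup_def by simp
  then show False
    by simp
qed

lemma numerical_semigroup_conductor_le:
  assumes "numerical_semigroup S" and "conductor S \<le> n"
  shows "n \<in> S"
proof -
  have "finite (UNIV - S)"
    using assms(1) unfolding numerical_semigroup_def by blast
  then obtain b where "\<forall>x\<in>UNIV - S. x \<le> b"
    using finite_nat_set_iff_bounded_le by blast
  then have "\<forall>n\<ge>Suc b. n \<in> S"
    using not_less_eq_eq by blast
  then have "\<forall>n\<ge>conductor S. n \<in> S"
    unfolding conductor_def by (rule LeastI[of _ "Suc b"])
  with assms(2) show ?thesis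
    by blast
qed

lemma rho_in:
  assumes "numerical_semigroup S"
  shows "rho S i \<in> S"
  unfolding rho_def using enumerate_in_set numerical_semigroup_infinite[OF assms] .

lemma rho_strict_mono:
  assumes "numerical_semigroup S" and "1 \<le> a" and "a < b"
  shows "rho S a < rho S b"
  unfolding rho_def using enumerate_mono numerical_semigroup_infinite[OF assms(1)] assms(2,3)
  by simp

lemma rho_mono:
  assumes "numerical_semigroup S" and "1 \<le> a" and "a \<le> b"
  shows "rho S a \<le> rho S b"
  using rho_strict_mono[OF assms(1,2), of b] assms(3) by (cases "a = b") auto

lemma rho_one:
  assumes "numerical_semigroup S"
  shows "rho S 1 = 0"
  using assms unfolding rho_def numerical_semigroup_def by (simp add: enumerate_0 Least_eq_0)

lemma conductor_index_ge_2:
  assumes "numerical_semigroup S" and "S \<noteq> UNIV" and "1 \<le> r" and "rho S r = conductor S"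
  shows "2 \<le> r"
proof (rule ccontr)
  assume "\<not> 2 \<le> r"
  with assms(3) have "r = 1"
    by simp
  with assms(4) have "conductor S = 0"
    using rho_one[OF assms(1)] by simp
  then have "S = UNIV"
    using numerical_semigroup_conductor_le[OF assms(1)] by auto
  with assms(2) show False
    by contradiction
qed

lemma rho_beyond_conductor:
  assumes "numerical_semigroup S" and "1 \<le> r" and "rho S r = conductor S" and "r \<le> j"
  shows "rho S j = conductor S + (j - r)"
proof -
  have "enumerate S ((r - 1) + (j - r)) = enumerate S (r - 1) + (j - r)"
    using assms(3) numerical_semigroup_conductor_le[OF assms(1)]
    by (intro enumerate_add_beyond numerical_semigroup_infinite[OF assms(1)]) (auto simp: rho_def)
  moreover have "(r - 1) + (j - r) = j - 1"
    using assms(2,4) by simp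
  ultimately show ?thesis
    using assms(3) by (simp add: rho_def)
qed

lemma beta_eqI:
  assumes "1 \<le> k" and "\<forall>i\<in>{1..k}. rho S i \<in> Aset S x" and "2 * rho S k \<le> x"
    and "\<And>l. 2 * rho S l \<le> x \<Longrightarrow> l \<le> k"
  shows "beta S x = k"
  unfolding beta_def
  by (rule Max_eqI) (use assms finite_nat_set_iff_bounded_le in auto)

lemma beta_between_conductor_and_twice:
  assumes "numerical_semigroup S" and "2 \<le> r" and "rho S r = conductor S"
    and "conductor S + rho S (r - 1) \<le> x" and "x < 2 * conductor S"
  shows "beta S x = r - 1"
proof (rule beta_eqI)
  show "1 \<le> r - 1"
    using assms(2) by simp
  show "\<forall>i\<in>{1..r - 1}. rho S i \<in> Aset S x"
  proof
    fix i
    assume "i \<in> {1..r - 1}"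
    then have "rho S i \<le> rho S (r - 1)"
      using rho_mono[OF assms(1)] by simp
    then have "conductor S \<le> x - rho S i" and "rho S i \<le> x"
      using assms(4) by simp_all
    then show "rho S i \<in> Aset S x"
      unfolding Aset_def using rho_in[OF assms(1)] numerical_semigroup_conductor_le[OF assms(1)]
      by blast
  qed
  have "rho S (r - 1) < conductor S"
    using rho_strict_mono[OF assms(1), of "r - 1" r] assms(2,3) by simp
  then show "2 * rho S (r - 1) \<le> x"
    using assms(4) by simp
  show "l \<le> r - 1" if "2 * rho S l \<le> x" for l
  proof (rule ccontr)
    assume "\<not> l \<le> r - 1"
    then have "conductor S \<le> rho S l"
      using rho_mono[OF assms(1), of r l] assms(2,3) by simp
    with that assms(5) show False
      by simp
  qed
qed

theorem mainTheorem9: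
  fixes S :: "nat set" and r j :: nat
  assumes "numerical_semigroup S"
    and "S \<noteq> UNIV"
    and "Arf S"
    and "1 \<le> r"
    and "rho S r = conductor S"
    and "rho S (r - 1) + r \<le> j"
    and "j < conductor S + r"
  shows "beta S (rho S j) = r - 1"
proof (rule beta_between_conductor_and_twice[OF assms(1) _ assms(5)])
  show "2 \<le> r"
    using conductor_index_ge_2[OF assms(1,2,4,5)] .
  have "rho S j = conductor S + (j - r)"
    using rho_beyond_conductor[OF assms(1,4,5)] assms(6) by simp
  with assms(6,7) show "conductor S + rho S (r - 1) \<le> rho S j" and "rho S j < 2 * conductor S"
    by simp_all
qed

end
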